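(* Let $G=(V,E)$ be a finite connected simple graph, let $m_0\colon V\to\mathbb{R}_{>0}$ be a vertex-weight and $d\colon E\to\mathbb{R}_{>0}$ a distance parameter, and set $M=\sum_{u\in V}m_0(u)$, $D^2=\sum_{uv\in E}d(uv)^2$. Let $m_1\colon E\to\mathbb{R}_{\ge 0}$ be an edge-weight such that the graph $(V,\{uv\in E: m_1(uv)>0\})$ is connected and $\sum_{uv\in E}m_1(uv)d(uv)^2=D^2$. Then $$\delta(G,m_0,d)\ \ge\ 1-\frac{D^2/M}{\lambda_1(G,(m_0,m_1))}.$$ Moreover, equality holds if and only if there exists a map $\varphi\colon V\to\mathbb{R}^{|V|}$ satisfying $\sum_{u\in V}m_0(u)\|\varphi(u)\|^2=M$ and $\|\varphi(u)-\varphi(v)\|\le d(uv)$ for all $uv\in E$, such that (i) $m_1(uv)\big(d(uv)^2-\|\varphi(u)-\varphi(v)\|^2\big)=0$ for all $uv\in E$, and (ii) $\Delta_{(m_0,m_1)}\varphi=\lambda_1(G,(m_0,m_1))\,(\varphi-\mathrm{bar}(\varphi))$, where $\Delta_{(m_0,m_1)}$ is applied componentwise (i.e. each component of $\varphi-\mathrm{bar}(\varphi)$ is an eigenvector of $\Delta_{(m_0,m_1)}$ for the eigenvalue $\lambda_1(G,(m_0,m_1))$).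
   Context: Edges are unordered pairs $uv=vu$; write $v\sim u$ if $uv\in E$. $\|\cdot\|$ is the Euclidean norm on $\mathbb{R}^{|V|}$. For $\varphi\colon V\to\mathbb{R}^{|V|}$, the affine barycenter is $\mathrm{bar}(\varphi)=\frac1M\sum_{u\in V}m_0(u)\varphi(u)$. Define $\delta(G,m_0,d)=\inf_\varphi\|\mathrm{bar}(\varphi)\|^2$, the infimum over all maps $\varphi\colon V\to\mathbb{R}^{|V|}$ with $\sum_{u\in V}m_0(u)\|\varphi(u)\|^2=M$ and $\|\varphi(u)-\varphi(v)\|\le d(uv)$ for all $uv\in E$. For an edge-weight $m_1\colon E\to\mathbb{R}_{\ge0}$, the Laplacian $\Delta_{(m_0,m_1)}$ acts on functions $f\colon V\to\mathbb{R}$ by $(\Delta_{(m_0,m_1)}f)(u)=\frac{1}{m_0(u)}\big[(\sum_{v\sim u}m_1(uv))f(u)-\sum_{v\sim u}m_1(uv)f(v)\big]$; it is symmetric and nonnegative for the inner product $\langle f_1,f_2\rangle=\sum_u m_0(u)f_1(u)f_2(u)$, and when $(V,\{uv: m_1(uv)>0\})$ is connected its kernel is the constants. $\lambda_1(G,(m_0,m_1))$ denotes its smallest positive eigenvalue, equivalently $\inf_f \frac{\sum_{uv\in E}m_1(uv)(f(u)-f(v))^2}{\sum_{u}m_0(u)(f(u)-\bar f)^2}$ over nonconstant $f$, with $\bar f=\frac1M\sum_u m_0(u)f(u)$. *)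

theory Defs
  imports "HOL-Analysis.Analysis"
begin

definition simple_graph :: "'a set \<Rightarrow> 'a set set \<Rightarrow> bool" where
  "simple_graph V E \<longleftrightarrow> finite V \<and> (\<forall>e\<in>E. \<exists>u v. u \<noteq> v \<and> u \<in> V \<and> v \<in> V \<and> e = {u, v})"

definition graph_connected :: "'a set \<Rightarrow> 'a set set \<Rightarrow> bool" where
  "graph_connected V E \<longleftrightarrow> V \<noteq> {} \<and>
     (\<forall>u\<in>V. \<forall>v\<in>V. (u, v) \<in> {(x, y). {x, y} \<in> E}\<^sup>*)"

definition total_mass :: "'a set \<Rightarrow> ('a \<Rightarrow> real) \<Rightarrow> real" where
  "total_mass V m0 = (\<Sum>u\<in>V. m0 u)"

definition bary :: "'a set \<Rightarrow> ('a \<Rightarrow> real) \<Rightarrow> ('a \<Rightarrow> real ^ 'n) \<Rightarrow> real ^ 'n" where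
  "bary V m0 \<phi> = (1 / total_mass V m0) *\<^sub>R (\<Sum>u\<in>V. m0 u *\<^sub>R \<phi> u)"

definition admissible ::
  "'a set \<Rightarrow> 'a set set \<Rightarrow> ('a \<Rightarrow> real) \<Rightarrow> ('a set \<Rightarrow> real) \<Rightarrow> ('a \<Rightarrow> real ^ 'n) \<Rightarrow> bool" where
  "admissible V E m0 d \<phi> \<longleftrightarrow>
     (\<Sum>u\<in>V. m0 u * (norm (\<phi> u))\<^sup>2) = total_mass V m0 \<and>
     (\<forall>u\<in>V. \<forall>v\<in>V. {u, v} \<in> E \<longrightarrow> norm (\<phi> u - \<phi> v) \<le> d {u, v})"

text \<open>delta(G,m0,d), with maps into real^'n (the statement takes CARD('n) = |V|).\<close>
definition delta ::
  "'n::finite itself \<Rightarrow> 'a set \<Rightarrow> 'a set set \<Rightarrow> ('a \<Rightarrow> real) \<Rightarrow> ('a set \<Rightarrow> real) \<Rightarrow> real" where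
  "delta (_ :: 'n::finite itself) V E m0 d =
     Inf {(norm (bary V m0 \<phi>))\<^sup>2 | \<phi> :: 'a \<Rightarrow> real ^ 'n. admissible V E m0 d \<phi>}"

definition laplacian ::
  "'a set \<Rightarrow> 'a set set \<Rightarrow> ('a \<Rightarrow> real) \<Rightarrow> ('a set \<Rightarrow> real) \<Rightarrow> ('a \<Rightarrow> real) \<Rightarrow> 'a \<Rightarrow> real" where
  "laplacian V E m0 m1 f u =
     (1 / m0 u) * ((\<Sum>v\<in>{v\<in>V. {u, v} \<in> E}. m1 {u, v}) * f u
                   - (\<Sum>v\<in>{v\<in>V. {u, v} \<in> E}. m1 {u, v} * f v))"

definition lambda1 ::
  "'a set \<Rightarrow> 'a set set \<Rightarrow> ('a \<Rightarrow> real) \<Rightarrow> ('a set \<Rightarrow> real) \<Rightarrow> real" where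
  "lambda1 V E m0 m1 =
     Inf {t. t > 0 \<and> (\<exists>f. (\<exists>u\<in>V. f u \<noteq> 0) \<and>
                          (\<forall>u\<in>V. laplacian V E m0 m1 f u = t * f u))}"

end

theory Submission
  imports Defs
begin

(* For an admissible map phi, summing over the coordinates of phi turns the normalisation sum_u
   m0(u) |phi(u)|^2 = M into "total variance of phi = M (1 - |bar phi|^2)", while the edge
   constraints bound the total Dirichlet energy (1/2) sum_{u,v} m1(uv) |phi(u) - phi(v)|^2 by
   sum_e m1(e) d(e)^2 = D^2. The Poincare inequality lambda_1 * variance <= energy, applied to
   every coordinate, thus gives lambda_1 M (1 - |bar phi|^2) <= D^2, which is the bound. Equality
   for phi means equality in both estimates: the constraints are tight on every edge of positive
   weight, and every coordinate attains the Rayleigh quotient lambda_1, hence is an eigenfunction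
   (first variation). Compactness makes delta an attained minimum; it also shows that lambda_1 is
   the minimum of the Rayleigh quotient, i.e. that the Poincare inequality holds with lambda_1. *)

lemma quadratic_nonneg_imp_linear_coeff_zero:
  fixes a b :: real
  assumes nonneg: "\<And>t. 0 \<le> a * t + b * t\<^sup>2"
  shows "a = 0"
proof -
  define s where "s = 1 / (\<bar>b\<bar> + 1)"
  have s: "s > 0" "b * s < 1"
    unfolding s_def by (auto simp: field_simps)
  have "0 \<le> a * (- a * s) + b * (- a * s)\<^sup>2" by (rule nonneg)
  also have "\<dots> = a\<^sup>2 * (s * (b * s - 1))" by (simp add: algebra_simps power2_eq_square)
  finally have "0 \<le> a\<^sup>2 * (s * (b * s - 1))" .
  moreover have neg: "s * (b * s - 1) < 0" using s by (simp add: mult_pos_neg)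
  then have "a\<^sup>2 * (s * (b * s - 1)) \<le> 0" by (simp add: mult_nonneg_nonpos)
  ultimately have "a\<^sup>2 * (s * (b * s - 1)) = 0" by linarith
  with neg have "a\<^sup>2 = 0" by (metis mult_eq_0_iff less_irrefl)
  then show ?thesis by simp
qed

lemma sum_mono_eq_iff:
  fixes f g :: "'i \<Rightarrow> 'a::ordered_cancel_comm_monoid_add"
  assumes "finite A" and "\<And>x. x \<in> A \<Longrightarrow> f x \<le> g x"
  shows "sum f A = sum g A \<longleftrightarrow> (\<forall>x\<in>A. f x = g x)"
  using assms sum_mono_inv[of f A g] by (auto intro: sum.cong)

lemma double_sum_mono_eq_iff:
  fixes f g :: "'i \<Rightarrow> 'j \<Rightarrow> 'a::ordered_cancel_comm_monoid_add"
  assumes "finite A" and "finite B" and "\<And>x y. x \<in> A \<Longrightarrow> y \<in> B \<Longrightarrow> f x y \<le> g x y"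
  shows "(\<Sum>x\<in>A. \<Sum>y\<in>B. f x y) = (\<Sum>x\<in>A. \<Sum>y\<in>B. g x y) \<longleftrightarrow> (\<forall>x\<in>A. \<forall>y\<in>B. f x y = g x y)"
  using assms by (simp add: sum_mono_eq_iff sum_mono)

lemma pointwise_compact_attains_min:
  fixes K :: "('a \<Rightarrow> 'b::heine_borel) set" and F :: "('a \<Rightarrow> 'b) \<Rightarrow> real"
  assumes "finite V" and "K \<noteq> {}" and "bdd_below (F ` K)"
    and bounded: "\<And>u. u \<in> V \<Longrightarrow> bounded ((\<lambda>\<phi>. \<phi> u) ` K)"
    and limit: "\<And>\<phi>s \<psi>. (\<And>k. \<phi>s k \<in> K) \<Longrightarrow> (\<And>u. u \<in> V \<Longrightarrow> (\<lambda>k. \<phi>s k u) \<longlonglongrightarrow> \<psi> u)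
                  \<Longrightarrow> \<psi> \<in> K \<and> (\<lambda>k. F (\<phi>s k)) \<longlonglongrightarrow> F \<psi>"
  shows "\<exists>\<psi>\<in>K. \<forall>\<phi>\<in>K. F \<psi> \<le> F \<phi>"
proof -
  have "Inf (F ` K) \<in> closure (F ` K)"
    using assms by (intro closure_contains_Inf) auto
  then obtain ys where ys: "\<And>k. ys k \<in> F ` K" and "ys \<longlonglongrightarrow> Inf (F ` K)"
    unfolding closure_sequential by blast
  then have "\<forall>k. \<exists>\<phi>. \<phi> \<in> K \<and> ys k = F \<phi>" by blast
  then obtain \<phi>s where \<phi>s: "\<And>k. \<phi>s k \<in> K" and "\<And>k. ys k = F (\<phi>s k)" by metis
  then have "ys = (\<lambda>k. F (\<phi>s k))" by (simp add: fun_eq_iff)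
  with \<open>ys \<longlonglongrightarrow> Inf (F ` K)\<close> have minimizing: "(\<lambda>k. F (\<phi>s k)) \<longlonglongrightarrow> Inf (F ` K)" by simp
  have "bounded ((\<lambda>\<phi>. \<phi> u) ` range \<phi>s)" if "u \<in> V" for u
    using bounded[OF that] by (rule bounded_subset) (use \<phi>s in auto)
  then have "\<forall>\<delta>\<subseteq>V. \<exists>\<psi> r. strict_mono r \<and>
      (\<forall>\<epsilon>>0. \<forall>\<^sub>F k in sequentially. \<forall>u\<in>\<delta>. dist (\<phi>s (r k) u) (\<psi> u) < \<epsilon>)"
    using \<open>finite V\<close>
    by (intro compact_lemma_general[where f = \<phi>s and proj = "\<lambda>\<phi> u. \<phi> u" and unproj = id])
      simp_all
  then obtain \<psi> r where r: "strict_mono r"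
    and conv: "\<forall>\<epsilon>>0. \<forall>\<^sub>F k in sequentially. \<forall>u\<in>V. dist (\<phi>s (r k) u) (\<psi> u) < \<epsilon>"
    by blast
  have "(\<lambda>k. \<phi>s (r k) u) \<longlonglongrightarrow> \<psi> u" if "u \<in> V" for u
  proof (unfold tendsto_iff, intro allI impI)
    fix \<epsilon> :: real assume "\<epsilon> > 0"
    with conv have "\<forall>\<^sub>F k in sequentially. \<forall>u\<in>V. dist (\<phi>s (r k) u) (\<psi> u) < \<epsilon>" by blast
    then show "\<forall>\<^sub>F k in sequentially. dist (\<phi>s (r k) u) (\<psi> u) < \<epsilon>"
      by (rule eventually_mono) (use \<open>u \<in> V\<close> in blast)
  qed
  then have "\<psi> \<in> K" and lim: "(\<lambda>k. F (\<phi>s (r k))) \<longlonglongrightarrow> F \<psi>"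
    using limit[of "\<lambda>k. \<phi>s (r k)" \<psi>] \<phi>s by blast+
  moreover have "(\<lambda>k. F (\<phi>s (r k))) \<longlonglongrightarrow> Inf (F ` K)"
    using LIMSEQ_subseq_LIMSEQ[OF minimizing r] by (simp add: o_def)
  ultimately have "F \<psi> = Inf (F ` K)" using LIMSEQ_unique by blast
  moreover have "Inf (F ` K) \<le> F \<phi>" if "\<phi> \<in> K" for \<phi>
    using that \<open>bdd_below (F ` K)\<close> by (intro cInf_lower) auto
  ultimately show ?thesis using \<open>\<psi> \<in> K\<close> by (intro bexI[of _ \<psi>]) auto
qed

lemma norm_le_sqrt_of_weighted_sum_sq:
  fixes f :: "'a \<Rightarrow> 'b::real_normed_vector"
  assumes "finite V" and "\<forall>v\<in>V. m v > 0" and "u \<in> V"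
    and "(\<Sum>v\<in>V. m v * (norm (f v))\<^sup>2) \<le> c"
  shows "norm (f u) \<le> sqrt (c / m u)"
proof -
  have "m u * (norm (f u))\<^sup>2 \<le> (\<Sum>v\<in>V. m v * (norm (f v))\<^sup>2)"
    using assms by (intro member_le_sum) (auto intro: less_imp_le)
  then have "(norm (f u))\<^sup>2 \<le> c / m u"
    using assms by (simp add: pos_le_divide_eq mult.commute)
  then show ?thesis by (rule real_le_rsqrt)
qed

lemma norm_sq_vec_eq_sum: "(norm (x :: real ^ 'n))\<^sup>2 = (\<Sum>i\<in>UNIV. (x $ i)\<^sup>2)"
  unfolding power2_norm_eq_inner inner_vec_def by (simp add: power2_eq_square)

lemma simple_graph_sum_edges:
  fixes g :: "'a set \<Rightarrow> real"
  assumes "simple_graph V E"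
  shows "(\<Sum>e\<in>E. g e) = (\<Sum>u\<in>V. \<Sum>v\<in>V. if {u, v} \<in> E then g {u, v} else 0) / 2"
proof -
  define P where "P = {p \<in> V \<times> V. {fst p, snd p} \<in> E}"
  define edge where "edge = (\<lambda>p :: 'a \<times> 'a. {fst p, snd p})"
  have "finite V" using assms unfolding simple_graph_def by simp
  then have "finite P" unfolding P_def by simp
  have edges: "E = edge ` P"
  proof
    show "edge ` P \<subseteq> E" unfolding P_def edge_def by auto
    show "E \<subseteq> edge ` P"
    proof
      fix e assume "e \<in> E"
      then obtain a b where "a \<in> V" "b \<in> V" "e = {a, b}"
        using assms unfolding simple_graph_def by blast
      then show "e \<in> edge ` P"
        using \<open>e \<in> E\<close> unfolding P_def edge_def by (intro image_eqI[of _ _ "(a, b)"]) auto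
    qed
  qed
  have fibre: "(\<Sum>p\<in>{p \<in> P. edge p = e}. g (edge p)) = 2 * g e" if "e \<in> E" for e
  proof -
    obtain a b where ab: "a \<noteq> b" "a \<in> V" "b \<in> V" "e = {a, b}"
      using assms \<open>e \<in> E\<close> unfolding simple_graph_def by blast
    then have "{p \<in> P. edge p = e} = {(a, b), (b, a)}"
      using \<open>e \<in> E\<close> unfolding P_def edge_def by (auto simp: doubleton_eq_iff insert_commute)
    then show ?thesis using ab by (simp add: edge_def insert_commute)
  qed
  have "(\<Sum>u\<in>V. \<Sum>v\<in>V. if {u, v} \<in> E then g {u, v} else 0) = (\<Sum>p\<in>P. g (edge p))"
    using \<open>finite V\<close> unfolding P_def edge_def
    by (simp add: sum.cartesian_product case_prod_beta sum.inter_filter)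
  also have "\<dots> = (\<Sum>e\<in>edge ` P. \<Sum>p\<in>{p \<in> P. edge p = e}. g (edge p))"
    by (rule sum.image_gen[OF \<open>finite P\<close>])
  also have "\<dots> = (\<Sum>e\<in>E. 2 * g e)"
    unfolding edges[symmetric] using fibre by (rule sum.cong[OF refl])
  finally show ?thesis by (simp add: sum_distrib_left[symmetric])
qed

locale weighted_graph =
  fixes V :: "'a set" and E :: "'a set set" and m0 :: "'a \<Rightarrow> real" and m1 :: "'a set \<Rightarrow> real"
  assumes simple: "simple_graph V E" and nonempty: "V \<noteq> {}"
    and m0_pos: "\<forall>u\<in>V. m0 u > 0" and m1_nonneg: "\<forall>e\<in>E. m1 e \<ge> 0"
begin

lemma finite_vertices: "finite V"
  using simple unfolding simple_graph_def by simp

lemma total_mass_pos: "total_mass V m0 > 0"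
  unfolding total_mass_def using finite_vertices nonempty m0_pos by (simp add: sum_pos)

definition weight :: "'a \<Rightarrow> 'a \<Rightarrow> real" where
  "weight u v = (if {u, v} \<in> E then m1 {u, v} else 0)"

definition mean :: "('a \<Rightarrow> real) \<Rightarrow> real" where
  "mean f = (\<Sum>u\<in>V. m0 u * f u) / total_mass V m0"

definition covariance :: "('a \<Rightarrow> real) \<Rightarrow> ('a \<Rightarrow> real) \<Rightarrow> real" where
  "covariance f g = (\<Sum>u\<in>V. m0 u * (f u - mean f) * (g u - mean g))"

abbreviation variance :: "('a \<Rightarrow> real) \<Rightarrow> real" where
  "variance f \<equiv> covariance f f"

definition dirichlet :: "('a \<Rightarrow> real) \<Rightarrow> ('a \<Rightarrow> real) \<Rightarrow> real" where
  "dirichlet f g = (\<Sum>u\<in>V. \<Sum>v\<in>V. weight u v * (f u - f v) * (g u - g v)) / 2"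

abbreviation energy :: "('a \<Rightarrow> real) \<Rightarrow> real" where
  "energy f \<equiv> dirichlet f f"

lemma weight_commute: "weight u v = weight v u"
  unfolding weight_def by (simp add: insert_commute)

lemma weight_nonneg: "weight u v \<ge> 0"
  unfolding weight_def using m1_nonneg by auto

lemma m0_mult_laplacian:
  assumes "u \<in> V"
  shows "m0 u * laplacian V E m0 m1 f u = (\<Sum>v\<in>V. weight u v * (f u - f v))"
proof -
  have "m0 u \<noteq> 0" using assms m0_pos by auto
  then have "m0 u * laplacian V E m0 m1 f u = (\<Sum>v\<in>{v\<in>V. {u, v} \<in> E}. m1 {u, v} * (f u - f v))"
    unfolding laplacian_def
    by (simp add: sum_distrib_right sum_subtractf right_diff_distrib)
  also have "\<dots> = (\<Sum>v\<in>V. weight u v * (f u - f v))"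
    unfolding weight_def using finite_vertices by (auto simp: sum.inter_filter intro!: sum.cong)
  finally show ?thesis .
qed

lemma green_formula: "(\<Sum>u\<in>V. m0 u * laplacian V E m0 m1 f u * g u) = dirichlet f g"
proof -
  define S where "S = (\<Sum>u\<in>V. \<Sum>v\<in>V. weight u v * (f u - f v) * g u)"
  have lhs: "(\<Sum>u\<in>V. m0 u * laplacian V E m0 m1 f u * g u) = S"
    unfolding S_def using m0_mult_laplacian by (simp add: sum_distrib_right)
  have "S = (\<Sum>u\<in>V. \<Sum>v\<in>V. weight u v * (f v - f u) * g v)"
    unfolding S_def by (subst sum.swap) (simp add: weight_commute)
  then have "2 * S = (\<Sum>u\<in>V. \<Sum>v\<in>V. weight u v * (f u - f v) * g u + weight u v * (f v - f u) * g v)"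
    unfolding S_def by (simp add: sum.distrib)
  also have "\<dots> = (\<Sum>u\<in>V. \<Sum>v\<in>V. weight u v * (f u - f v) * (g u - g v))"
    by (intro sum.cong refl) (simp add: algebra_simps)
  finally show ?thesis unfolding lhs dirichlet_def by simp
qed

lemma sum_m0_laplacian: "(\<Sum>u\<in>V. m0 u * laplacian V E m0 m1 f u) = 0"
  using green_formula[of f "\<lambda>_. 1"] unfolding dirichlet_def by simp

lemma energy_eq: "energy f = (\<Sum>u\<in>V. \<Sum>v\<in>V. weight u v * (f u - f v)\<^sup>2) / 2"
  unfolding dirichlet_def by (simp add: power2_eq_square mult.assoc)

lemma energy_nonneg: "energy f \<ge> 0"
  unfolding energy_eq using weight_nonneg by (intro divide_nonneg_pos sum_nonneg) auto

lemma sum_m0_centered: "(\<Sum>u\<in>V. m0 u * (f u - mean f)) = 0"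
proof -
  have "(\<Sum>u\<in>V. m0 u * (f u - mean f)) = (\<Sum>u\<in>V. m0 u * f u) - total_mass V m0 * mean f"
    unfolding total_mass_def by (simp add: right_diff_distrib sum_subtractf sum_distrib_right)
  then show ?thesis using total_mass_pos unfolding mean_def by simp
qed

lemma covariance_eq: "covariance f g = (\<Sum>u\<in>V. m0 u * (f u - mean f) * g u)"
proof -
  have "covariance f g = (\<Sum>u\<in>V. m0 u * (f u - mean f) * g u) - mean g * (\<Sum>u\<in>V. m0 u * (f u - mean f))"
    unfolding covariance_def by (simp add: sum_distrib_left sum_subtractf[symmetric] algebra_simps)
  then show ?thesis using sum_m0_centered by simp
qed

lemma variance_eq: "variance f = (\<Sum>u\<in>V. m0 u * (f u)\<^sup>2) - total_mass V m0 * (mean f)\<^sup>2"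
proof -
  have "variance f = (\<Sum>u\<in>V. m0 u * (f u)\<^sup>2) - mean f * (\<Sum>u\<in>V. m0 u * f u)"
    unfolding covariance_eq
    by (simp add: sum_distrib_left sum_subtractf[symmetric] power2_eq_square algebra_simps)
  moreover have "(\<Sum>u\<in>V. m0 u * f u) = total_mass V m0 * mean f"
    unfolding mean_def using total_mass_pos by simp
  ultimately show ?thesis by (simp add: power2_eq_square)
qed

lemma variance_eq_sum_sq: "variance f = (\<Sum>u\<in>V. m0 u * (f u - mean f)\<^sup>2)"
  unfolding covariance_def by (simp add: power2_eq_square mult.assoc)

lemma variance_nonneg: "variance f \<ge> 0"
  unfolding variance_eq_sum_sq using m0_pos by (auto intro!: sum_nonneg)

lemma variance_pos:
  assumes "u \<in> V" "v \<in> V" "f u \<noteq> f v"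
  shows "variance f > 0"
proof -
  have "\<not> (\<forall>w\<in>V. m0 w * (f w - mean f)\<^sup>2 = 0)"
    using assms m0_pos by (metis mult_eq_0_iff order_less_irrefl right_minus_eq zero_eq_power2)
  then have "variance f \<noteq> 0"
    unfolding variance_eq_sum_sq using finite_vertices m0_pos
    by (subst sum_nonneg_eq_0_iff) (auto simp: less_imp_le)
  then show ?thesis using variance_nonneg by (simp add: order_le_neq_trans)
qed

lemma mean_add_scaled: "mean (\<lambda>u. f u + t * h u) = mean f + t * mean h"
  unfolding mean_def by (simp add: sum.distrib sum_distrib_left algebra_simps add_divide_distrib)

lemma energy_add_scaled:
  "energy (\<lambda>u. f u + t * h u) = energy f + 2 * t * dirichlet f h + t\<^sup>2 * energy h"
proof -
  have "weight u v * ((f u + t * h u) - (f v + t * h v)) * ((f u + t * h u) - (f v + t * h v))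
      = weight u v * (f u - f v) * (f u - f v) + 2 * t * (weight u v * (f u - f v) * (h u - h v))
        + t\<^sup>2 * (weight u v * (h u - h v) * (h u - h v))" for u v
    by (simp add: algebra_simps power2_eq_square)
  then show ?thesis unfolding dirichlet_def
    by (simp only: sum.distrib sum_distrib_left[symmetric]) (simp add: field_simps)
qed

lemma variance_add_scaled:
  "variance (\<lambda>u. f u + t * h u) = variance f + 2 * t * covariance f h + t\<^sup>2 * variance h"
proof -
  have "m0 u * ((f u + t * h u) - (mean f + t * mean h)) * ((f u + t * h u) - (mean f + t * mean h))
      = m0 u * (f u - mean f) * (f u - mean f) + 2 * t * (m0 u * (f u - mean f) * (h u - mean h))
        + t\<^sup>2 * (m0 u * (h u - mean h) * (h u - mean h))" for u
    by (simp add: algebra_simps power2_eq_square)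
  then show ?thesis unfolding covariance_def mean_add_scaled
    by (simp only: sum.distrib sum_distrib_left[symmetric])
qed

lemma edge_vertices:
  assumes "{x, y} \<in> E"
  shows "x \<in> V" and "y \<in> V"
  using simple assms unfolding simple_graph_def by (metis doubleton_eq_iff)+

lemma energy_eq_of_eigen:
  assumes "\<forall>u\<in>V. laplacian V E m0 m1 f u = \<mu> * (f u - mean f)"
  shows "energy f = \<mu> * variance f"
proof -
  have "energy f = (\<Sum>u\<in>V. m0 u * laplacian V E m0 m1 f u * f u)" by (rule green_formula[symmetric])
  also have "\<dots> = (\<Sum>u\<in>V. \<mu> * (m0 u * (f u - mean f) * f u))"
    using assms by (intro sum.cong) auto
  also have "\<dots> = \<mu> * (\<Sum>u\<in>V. m0 u * (f u - mean f) * f u)"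
    by (simp add: sum_distrib_left)
  also have "\<dots> = \<mu> * variance f" by (simp add: covariance_eq)
  finally show ?thesis .
qed

text \<open>A minimiser of the Rayleigh quotient is an eigenfunction: perturb it by the indicator of a
  vertex; the linear term of the resulting nonnegative quadratic must vanish.\<close>
lemma eigen_of_energy_eq:
  assumes poincare: "\<And>g. \<mu> * variance g \<le> energy g" and eq: "energy f = \<mu> * variance f"
  shows "\<forall>u\<in>V. laplacian V E m0 m1 f u = \<mu> * (f u - mean f)"
proof
  fix u assume "u \<in> V"
  define h where "h = (\<lambda>w. if w = u then 1 else (0::real))"
  have "0 \<le> 2 * (dirichlet f h - \<mu> * covariance f h) * t + (energy h - \<mu> * variance h) * t\<^sup>2" for t
    using poincare[of "\<lambda>w. f w + t * h w"] eq
    unfolding energy_add_scaled variance_add_scaled by (simp add: algebra_simps)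
  from quadratic_nonneg_imp_linear_coeff_zero[OF this]
  have "dirichlet f h = \<mu> * covariance f h" by simp
  moreover have "dirichlet f h = m0 u * laplacian V E m0 m1 f u"
    unfolding green_formula[symmetric] h_def using \<open>u \<in> V\<close> finite_vertices
    by (simp add: if_distrib cong: if_cong)
  moreover have "covariance f h = m0 u * (f u - mean f)"
    unfolding covariance_eq h_def using \<open>u \<in> V\<close> finite_vertices
    by (simp add: if_distrib cong: if_cong)
  ultimately show "laplacian V E m0 m1 f u = \<mu> * (f u - mean f)"
    using \<open>u \<in> V\<close> m0_pos by (metis mult.left_commute mult_cancel_left order_less_irrefl)
qed

lemma energy_zero_imp_constant:
  assumes conn: "graph_connected V {e\<in>E. m1 e > 0}" and "energy f = 0" and "u \<in> V" "v \<in> V"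
  shows "f u = f v"
proof -
  have nonneg: "0 \<le> weight x y * (f x - f y)\<^sup>2" for x y
    using weight_nonneg by simp
  have "(\<Sum>x\<in>V. \<Sum>y\<in>V. weight x y * (f x - f y)\<^sup>2) = 0"
    using \<open>energy f = 0\<close> unfolding energy_eq by simp
  then have terms: "weight x y * (f x - f y)\<^sup>2 = 0" if "x \<in> V" "y \<in> V" for x y
    using that finite_vertices nonneg by (simp add: sum_nonneg_eq_0_iff sum_nonneg)
  have edge: "f x = f y" if "{x, y} \<in> E" "m1 {x, y} > 0" for x y
  proof -
    have "x \<in> V" "y \<in> V" using \<open>{x, y} \<in> E\<close> by (rule edge_vertices)+
    moreover have "weight x y > 0" using that unfolding weight_def by auto
    ultimately show ?thesis using terms[of x y] by simp
  qed
  have "(u, v) \<in> {(x, y). {x, y} \<in> {e\<in>E. m1 e > 0}}\<^sup>*"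
    using conn assms unfolding graph_connected_def by blast
  then show ?thesis
  proof (induction rule: rtrancl_induct)
    case (step y z)
    then show ?case using edge[of y z] by simp
  qed simp
qed

lemma variance_constant:
  assumes "\<forall>u\<in>V. f u = c"
  shows "variance f = 0"
proof -
  have "(\<Sum>u\<in>V. m0 u * f u) = total_mass V m0 * c"
    using assms unfolding total_mass_def by (simp add: sum_distrib_right)
  then have "mean f = c" unfolding mean_def using total_mass_pos by simp
  then show ?thesis using assms unfolding variance_eq_sum_sq by simp
qed

lemma single_vertex:
  assumes "\<not> (\<exists>a\<in>V. \<exists>b\<in>V. a \<noteq> b)"
  shows "E = {}" and "variance f = 0"
proof -
  show "E = {}" using simple assms unfolding simple_graph_def by blast
  obtain a where "V = {a}" using nonempty assms by blast
  then show "variance f = 0" by (intro variance_constant[of f "f a"]) simp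
qed

definition normalized :: "('a \<Rightarrow> real) \<Rightarrow> bool" where
  "normalized f \<longleftrightarrow> (\<Sum>u\<in>V. m0 u * f u) = 0 \<and> (\<Sum>u\<in>V. m0 u * (f u)\<^sup>2) = 1"

lemma normalized_mean_variance:
  assumes "normalized f"
  shows "mean f = 0" and "variance f = 1"
  using assms unfolding normalized_def variance_eq mean_def by simp_all

lemma normalized_rescale:
  assumes "variance f > 0"
  shows "normalized (\<lambda>u. (f u - mean f) / sqrt (variance f))"
    and "energy (\<lambda>u. (f u - mean f) / sqrt (variance f)) = energy f / variance f"
proof -
  define s where "s = sqrt (variance f)"
  have s: "s > 0" "s\<^sup>2 = variance f" using assms unfolding s_def by auto
  have "(\<Sum>u\<in>V. m0 u * ((f u - mean f) / s)) = (\<Sum>u\<in>V. m0 u * (f u - mean f)) / s"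
    by (simp add: sum_divide_distrib)
  moreover have "(\<Sum>u\<in>V. m0 u * ((f u - mean f) / s)\<^sup>2) = variance f / s\<^sup>2"
    by (simp add: variance_eq_sum_sq sum_divide_distrib power_divide)
  ultimately show "normalized (\<lambda>u. (f u - mean f) / sqrt (variance f))"
    unfolding normalized_def s_def[symmetric] using sum_m0_centered s assms by simp
  have "energy (\<lambda>u. (f u - mean f) / s) = energy f / s\<^sup>2"
    unfolding energy_eq
    by (simp add: diff_divide_distrib[symmetric] power_divide sum_divide_distrib[symmetric])
  then show "energy (\<lambda>u. (f u - mean f) / sqrt (variance f)) = energy f / variance f"
    using s unfolding s_def by simp
qed

lemma normalized_energy_min:
  assumes "a \<in> V" "b \<in> V" "a \<noteq> b"
  obtains g where "normalized g" and "\<And>f. normalized f \<Longrightarrow> energy g \<le> energy f"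
proof -
  define K where "K = {f. normalized f}"
  have "variance (\<lambda>w. if w = a then 1 else 0) > 0"
    using assms by (intro variance_pos[of a b]) auto
  then have "K \<noteq> {}" using normalized_rescale(1) unfolding K_def by blast
  moreover have "bdd_below (energy ` K)" using energy_nonneg by (intro bdd_belowI[of _ 0]) auto
  moreover have "bounded ((\<lambda>f. f u) ` K)" if "u \<in> V" for u
  proof -
    have "norm (f u) \<le> sqrt (1 / m0 u)" if "f \<in> K" for f
      using norm_le_sqrt_of_weighted_sum_sq[of V m0 u f 1] \<open>u \<in> V\<close> that finite_vertices m0_pos
      unfolding K_def normalized_def by simp
    then show ?thesis unfolding bounded_iff by blast
  qed
  moreover have "\<psi> \<in> K \<and> (\<lambda>k. energy (fs k)) \<longlonglongrightarrow> energy \<psi>"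
    if in_K: "\<And>k. fs k \<in> K" and lim: "\<And>u. u \<in> V \<Longrightarrow> (\<lambda>k. fs k u) \<longlonglongrightarrow> \<psi> u" for fs \<psi>
  proof -
    have "(\<lambda>k. \<Sum>u\<in>V. m0 u * fs k u) \<longlonglongrightarrow> (\<Sum>u\<in>V. m0 u * \<psi> u)"
      and "(\<lambda>k. \<Sum>u\<in>V. m0 u * (fs k u)\<^sup>2) \<longlonglongrightarrow> (\<Sum>u\<in>V. m0 u * (\<psi> u)\<^sup>2)"
      and "(\<lambda>k. energy (fs k)) \<longlonglongrightarrow> energy \<psi>"
      unfolding energy_eq using lim by (auto intro!: tendsto_intros)
    moreover have "(\<lambda>k. \<Sum>u\<in>V. m0 u * fs k u) = (\<lambda>k. 0)"
      and "(\<lambda>k. \<Sum>u\<in>V. m0 u * (fs k u)\<^sup>2) = (\<lambda>k. 1)"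
      using in_K unfolding K_def normalized_def by auto
    ultimately show ?thesis unfolding K_def normalized_def by (auto simp: LIMSEQ_const_iff)
  qed
  ultimately obtain g where "g \<in> K" "\<forall>f\<in>K. energy g \<le> energy f"
    using pointwise_compact_attains_min[OF finite_vertices, of K energy] by blast
  then show ?thesis using that unfolding K_def by blast
qed

lemma lambda1_eqI:
  assumes "\<mu> > 0" and poincare: "\<And>f. \<mu> * variance f \<le> energy f"
    and "u0 \<in> V" "g u0 \<noteq> 0" and "\<forall>u\<in>V. laplacian V E m0 m1 g u = \<mu> * g u"
  shows "lambda1 V E m0 m1 = \<mu>"
  unfolding lambda1_def
proof (rule cInf_eq_minimum)
  show "\<mu> \<in> {t. t > 0 \<and> (\<exists>f. (\<exists>u\<in>V. f u \<noteq> 0) \<and> (\<forall>u\<in>V. laplacian V E m0 m1 f u = t * f u))}"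
    using assms by blast
next
  fix t assume "t \<in> {t. t > 0 \<and> (\<exists>f. (\<exists>u\<in>V. f u \<noteq> 0) \<and> (\<forall>u\<in>V. laplacian V E m0 m1 f u = t * f u))}"
  then obtain f u1 where "t > 0" "u1 \<in> V" "f u1 \<noteq> 0" and eigen: "\<forall>u\<in>V. laplacian V E m0 m1 f u = t * f u"
    by blast
  have "t * (\<Sum>u\<in>V. m0 u * f u) = (\<Sum>u\<in>V. m0 u * laplacian V E m0 m1 f u)"
    using eigen by (simp add: sum_distrib_left algebra_simps)
  then have "mean f = 0" using sum_m0_laplacian \<open>t > 0\<close> unfolding mean_def by simp
  then have "energy f = t * variance f" using eigen by (intro energy_eq_of_eigen) simp
  moreover have "variance f > 0"
    unfolding variance_eq_sum_sq \<open>mean f = 0\<close> using finite_vertices m0_pos \<open>u1 \<in> V\<close> \<open>f u1 \<noteq> 0\<close>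
    by (intro sum_pos2[of V u1]) (auto simp: less_imp_le)
  ultimately show "\<mu> \<le> t" using poincare[of f] by simp
qed

lemma lambda1_pos_poincare:
  assumes conn: "graph_connected V {e\<in>E. m1 e > 0}" and "a \<in> V" "b \<in> V" "a \<noteq> b"
  shows "lambda1 V E m0 m1 > 0" and "lambda1 V E m0 m1 * variance f \<le> energy f"
proof -
  obtain g where g: "normalized g" and min: "\<And>f. normalized f \<Longrightarrow> energy g \<le> energy f"
    using normalized_energy_min assms(2-4) by blast
  have poincare: "energy g * variance f \<le> energy f" for f
  proof (cases "variance f > 0")
    case True
    then show ?thesis
      using min[OF normalized_rescale(1)[OF True]] normalized_rescale(2)[OF True]
      by (simp add: pos_le_divide_eq)
  next
    case False
    then show ?thesis using variance_nonneg[of f] energy_nonneg[of f] by simp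
  qed
  have "mean g = 0" "variance g = 1" using g by (rule normalized_mean_variance)+
  have "energy g \<noteq> 0"
  proof
    assume "energy g = 0"
    then have "\<forall>u\<in>V. g u = g a" using energy_zero_imp_constant[OF conn] \<open>a \<in> V\<close> by blast
    then show False using variance_constant[of g "g a"] \<open>variance g = 1\<close> by simp
  qed
  then have pos: "energy g > 0" using energy_nonneg[of g] by simp
  have "\<forall>u\<in>V. laplacian V E m0 m1 g u = energy g * g u"
    using eigen_of_energy_eq[OF poincare] \<open>mean g = 0\<close> \<open>variance g = 1\<close> by simp
  moreover obtain u0 where "u0 \<in> V" "g u0 \<noteq> 0"
    using variance_constant[of g 0] \<open>variance g = 1\<close> by auto
  ultimately have "lambda1 V E m0 m1 = energy g"
    using pos poincare by (intro lambda1_eqI) auto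
  then show "lambda1 V E m0 m1 > 0" and "lambda1 V E m0 m1 * variance f \<le> energy f"
    using pos poincare by simp_all
qed

lemma lambda1_poincare:
  assumes "graph_connected V {e\<in>E. m1 e > 0}"
  shows "lambda1 V E m0 m1 * variance f \<le> energy f"
proof (cases "\<exists>a\<in>V. \<exists>b\<in>V. a \<noteq> b")
  case True
  then show ?thesis using lambda1_pos_poincare(2)[OF assms] by blast
next
  case False
  then show ?thesis using single_vertex(2) energy_nonneg by simp
qed

lemma energy_eq_lambda1_iff_eigen:
  assumes "graph_connected V {e\<in>E. m1 e > 0}"
  shows "energy f = lambda1 V E m0 m1 * variance f
    \<longleftrightarrow> (\<forall>u\<in>V. laplacian V E m0 m1 f u = lambda1 V E m0 m1 * (f u - mean f))"
  using eigen_of_energy_eq[OF lambda1_poincare[OF assms]] energy_eq_of_eigen by blast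

lemma mean_component: "mean (\<lambda>w. \<phi> w $ i) = bary V m0 \<phi> $ i"
  unfolding mean_def bary_def by simp

lemma variance_components:
  "(\<Sum>i\<in>UNIV. variance (\<lambda>w. \<phi> w $ i))
     = (\<Sum>u\<in>V. m0 u * (norm (\<phi> u))\<^sup>2) - total_mass V m0 * (norm (bary V m0 \<phi>))\<^sup>2"
  unfolding variance_eq mean_component
  by (simp add: sum_subtractf norm_sq_vec_eq_sum sum_distrib_left sum.swap[of _ UNIV])

lemma energy_components:
  "(\<Sum>i\<in>UNIV. energy (\<lambda>w. \<phi> w $ i))
     = (\<Sum>u\<in>V. \<Sum>v\<in>V. weight u v * (norm (\<phi> u - \<phi> v :: real ^ 'n))\<^sup>2) / 2"
  unfolding energy_eq
  by (simp add: sum_divide_distrib[symmetric] norm_sq_vec_eq_sum sum_distrib_left sum.swap[of _ UNIV])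

lemma energy_components_le:
  assumes adm: "admissible V E m0 d \<phi>"
  shows "(\<Sum>i\<in>UNIV. energy (\<lambda>w. \<phi> w $ i)) \<le> (\<Sum>e\<in>E. m1 e * (d e)\<^sup>2)"
    and "(\<Sum>i\<in>UNIV. energy (\<lambda>w. \<phi> w $ i)) = (\<Sum>e\<in>E. m1 e * (d e)\<^sup>2)
      \<longleftrightarrow> (\<forall>u\<in>V. \<forall>v\<in>V. {u, v} \<in> E \<longrightarrow> m1 {u, v} * ((d {u, v})\<^sup>2 - (norm (\<phi> u - \<phi> v))\<^sup>2) = 0)"
proof -
  have edges: "(\<Sum>e\<in>E. m1 e * (d e)\<^sup>2) = (\<Sum>u\<in>V. \<Sum>v\<in>V. weight u v * (d {u, v})\<^sup>2) / 2"
    unfolding simple_graph_sum_edges[OF simple] weight_def by (auto intro!: sum.cong)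
  have le: "weight u v * (norm (\<phi> u - \<phi> v))\<^sup>2 \<le> weight u v * (d {u, v})\<^sup>2" if "u \<in> V" "v \<in> V" for u v
  proof (cases "{u, v} \<in> E")
    case True
    then have "norm (\<phi> u - \<phi> v) \<le> d {u, v}" using adm that unfolding admissible_def by blast
    then show ?thesis using weight_nonneg by (intro mult_left_mono power_mono) auto
  next
    case False
    then show ?thesis unfolding weight_def by simp
  qed
  show "(\<Sum>i\<in>UNIV. energy (\<lambda>w. \<phi> w $ i)) \<le> (\<Sum>e\<in>E. m1 e * (d e)\<^sup>2)"
    unfolding energy_components edges using le by (intro divide_right_mono sum_mono) auto
  have "weight u v * (norm (\<phi> u - \<phi> v))\<^sup>2 = weight u v * (d {u, v})\<^sup>2
      \<longleftrightarrow> ({u, v} \<in> E \<longrightarrow> m1 {u, v} * ((d {u, v})\<^sup>2 - (norm (\<phi> u - \<phi> v))\<^sup>2) = 0)" for u v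
    unfolding weight_def by (auto simp: right_diff_distrib)
  then show "(\<Sum>i\<in>UNIV. energy (\<lambda>w. \<phi> w $ i)) = (\<Sum>e\<in>E. m1 e * (d e)\<^sup>2)
      \<longleftrightarrow> (\<forall>u\<in>V. \<forall>v\<in>V. {u, v} \<in> E \<longrightarrow> m1 {u, v} * ((d {u, v})\<^sup>2 - (norm (\<phi> u - \<phi> v))\<^sup>2) = 0)"
    unfolding energy_components edges using double_sum_mono_eq_iff[OF finite_vertices finite_vertices le]
    by simp
qed

lemma lambda1_variance_components_le:
  assumes conn: "graph_connected V {e\<in>E. m1 e > 0}"
  shows "lambda1 V E m0 m1 * (\<Sum>i\<in>UNIV. variance (\<lambda>w. \<phi> w $ i)) \<le> (\<Sum>i\<in>UNIV. energy (\<lambda>w. \<phi> w $ i))"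
    and "lambda1 V E m0 m1 * (\<Sum>i\<in>UNIV. variance (\<lambda>w. \<phi> w $ i)) = (\<Sum>i\<in>UNIV. energy (\<lambda>w. \<phi> w $ i))
      \<longleftrightarrow> (\<forall>u\<in>V. \<forall>i. laplacian V E m0 m1 (\<lambda>w. \<phi> w $ i) u
             = lambda1 V E m0 m1 * (\<phi> u $ i - bary V m0 \<phi> $ i))"
proof -
  have le: "lambda1 V E m0 m1 * variance (\<lambda>w. \<phi> w $ i) \<le> energy (\<lambda>w. \<phi> w $ i)" for i
    by (rule lambda1_poincare[OF conn])
  then show "lambda1 V E m0 m1 * (\<Sum>i\<in>UNIV. variance (\<lambda>w. \<phi> w $ i)) \<le> (\<Sum>i\<in>UNIV. energy (\<lambda>w. \<phi> w $ i))"
    unfolding sum_distrib_left by (rule sum_mono)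
  have "lambda1 V E m0 m1 * (\<Sum>i\<in>UNIV. variance (\<lambda>w. \<phi> w $ i)) = (\<Sum>i\<in>UNIV. energy (\<lambda>w. \<phi> w $ i))
      \<longleftrightarrow> (\<forall>i. lambda1 V E m0 m1 * variance (\<lambda>w. \<phi> w $ i) = energy (\<lambda>w. \<phi> w $ i))"
    unfolding sum_distrib_left
    using sum_mono_eq_iff[of UNIV "\<lambda>i. lambda1 V E m0 m1 * variance (\<lambda>w. \<phi> w $ i)"] le by simp
  also have "\<dots> \<longleftrightarrow> (\<forall>i. \<forall>u\<in>V. laplacian V E m0 m1 (\<lambda>w. \<phi> w $ i) u
             = lambda1 V E m0 m1 * (\<phi> u $ i - bary V m0 \<phi> $ i))"
    by (simp add: eq_commute[of "lambda1 V E m0 m1 * _"] energy_eq_lambda1_iff_eigen[OF conn]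
        mean_component)
  finally show "lambda1 V E m0 m1 * (\<Sum>i\<in>UNIV. variance (\<lambda>w. \<phi> w $ i)) = (\<Sum>i\<in>UNIV. energy (\<lambda>w. \<phi> w $ i))
      \<longleftrightarrow> (\<forall>u\<in>V. \<forall>i. laplacian V E m0 m1 (\<lambda>w. \<phi> w $ i) u
             = lambda1 V E m0 m1 * (\<phi> u $ i - bary V m0 \<phi> $ i))"
    by blast
qed

lemma admissible_bary_bound:
  assumes conn: "graph_connected V {e\<in>E. m1 e > 0}"
    and m1_D: "(\<Sum>e\<in>E. m1 e * (d e)\<^sup>2) = (\<Sum>e\<in>E. (d e)\<^sup>2)"
    and adm: "admissible V E m0 d \<phi>"
  shows "1 - ((\<Sum>e\<in>E. (d e)\<^sup>2) / total_mass V m0) / lambda1 V E m0 m1 \<le> (norm (bary V m0 \<phi>))\<^sup>2"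
    and "(norm (bary V m0 \<phi>))\<^sup>2 = 1 - ((\<Sum>e\<in>E. (d e)\<^sup>2) / total_mass V m0) / lambda1 V E m0 m1
      \<longleftrightarrow> (\<forall>u\<in>V. \<forall>v\<in>V. {u, v} \<in> E \<longrightarrow>
             m1 {u, v} * ((d {u, v})\<^sup>2 - (norm (\<phi> u - \<phi> v))\<^sup>2) = 0)
        \<and> (\<forall>u\<in>V. \<forall>i. laplacian V E m0 m1 (\<lambda>w. \<phi> w $ i) u
             = lambda1 V E m0 m1 * (\<phi> u $ i - bary V m0 \<phi> $ i))"
proof -
  define lam where "lam = lambda1 V E m0 m1"
  define D where "D = (\<Sum>e\<in>E. (d e)\<^sup>2)"
  define M where "M = total_mass V m0"
  define S where "S = (\<Sum>i\<in>UNIV. variance (\<lambda>w. \<phi> w $ i))"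
  define Q where "Q = (\<Sum>i\<in>UNIV. energy (\<lambda>w. \<phi> w $ i))"
  define bary_sq where "bary_sq = (norm (bary V m0 \<phi>))\<^sup>2"
  have "M > 0" using total_mass_pos unfolding M_def .
  have S: "bary_sq = 1 - S / M"
    using adm \<open>M > 0\<close> unfolding S_def variance_components admissible_def M_def bary_sq_def
    by (simp add: field_simps)
  have QD: "Q \<le> D" using energy_components_le(1)[OF adm] m1_D unfolding Q_def D_def by simp
  have SQ: "lam * S \<le> Q"
    using lambda1_variance_components_le(1)[OF conn] unfolding lam_def S_def Q_def .
  have bound: "1 - D / M / lam \<le> bary_sq \<and> (bary_sq = 1 - D / M / lam \<longleftrightarrow> lam * S = D)"
  proof (cases "\<exists>a\<in>V. \<exists>b\<in>V. a \<noteq> b")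
    case True
    then have "lam > 0" using lambda1_pos_poincare(1)[OF conn] unfolding lam_def by blast
    have reorder: "D / M / lam = (D / lam) / M" by simp
    have "S / M \<le> (D / lam) / M \<longleftrightarrow> lam * S \<le> D"
      using \<open>lam > 0\<close> \<open>M > 0\<close> by (simp add: divide_le_cancel pos_le_divide_eq mult.commute)
    moreover have "S / M = (D / lam) / M \<longleftrightarrow> lam * S = D"
      using \<open>lam > 0\<close> \<open>M > 0\<close> by (auto simp: eq_divide_eq)
    ultimately show ?thesis unfolding reorder using S SQ QD by auto
  next
    case False
    \<comment> \<open>A single vertex: here lambda1 is the infimum of the empty set, but \<open>D = 0\<close> and
      \<open>S = 0\<close> make the bound hold with equality anyway.\<close>
    then have "D = 0" and "S = 0" using single_vertex unfolding D_def S_def by simp_all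
    then show ?thesis using S by simp
  qed
  have "lam * S = D \<longleftrightarrow> lam * S = Q \<and> Q = D" using SQ QD by auto
  then show "1 - ((\<Sum>e\<in>E. (d e)\<^sup>2) / total_mass V m0) / lambda1 V E m0 m1 \<le> (norm (bary V m0 \<phi>))\<^sup>2"
    and "(norm (bary V m0 \<phi>))\<^sup>2 = 1 - ((\<Sum>e\<in>E. (d e)\<^sup>2) / total_mass V m0) / lambda1 V E m0 m1
      \<longleftrightarrow> (\<forall>u\<in>V. \<forall>v\<in>V. {u, v} \<in> E \<longrightarrow>
             m1 {u, v} * ((d {u, v})\<^sup>2 - (norm (\<phi> u - \<phi> v))\<^sup>2) = 0)
        \<and> (\<forall>u\<in>V. \<forall>i. laplacian V E m0 m1 (\<lambda>w. \<phi> w $ i) u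
             = lambda1 V E m0 m1 * (\<phi> u $ i - bary V m0 \<phi> $ i))"
    using bound energy_components_le(2)[OF adm] lambda1_variance_components_le(2)[OF conn] m1_D
    unfolding lam_def D_def M_def S_def Q_def bary_sq_def by auto
qed

end

lemma admissible_const:
  assumes "norm x = 1" and "\<forall>e\<in>E. d e \<ge> 0"
  shows "admissible V E m0 d (\<lambda>_. x)"
  using assms unfolding admissible_def total_mass_def by simp

lemma admissible_limit:
  assumes adm: "\<And>k. admissible V E m0 d (\<phi>s k)"
    and lim: "\<And>u. u \<in> V \<Longrightarrow> (\<lambda>k. \<phi>s k u) \<longlonglongrightarrow> \<psi> u"
  shows "admissible V E m0 d \<psi>"
proof -
  have "(\<lambda>k. \<Sum>u\<in>V. m0 u * (norm (\<phi>s k u))\<^sup>2) \<longlonglongrightarrow> (\<Sum>u\<in>V. m0 u * (norm (\<psi> u))\<^sup>2)"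
    using lim by (auto intro!: tendsto_intros)
  moreover have "(\<lambda>k. \<Sum>u\<in>V. m0 u * (norm (\<phi>s k u))\<^sup>2) = (\<lambda>k. total_mass V m0)"
    using adm unfolding admissible_def by auto
  moreover have "norm (\<psi> u - \<psi> v) \<le> d {u, v}" if "u \<in> V" "v \<in> V" "{u, v} \<in> E" for u v
  proof (rule LIMSEQ_le_const2)
    show "(\<lambda>k. norm (\<phi>s k u - \<phi>s k v)) \<longlonglongrightarrow> norm (\<psi> u - \<psi> v)"
      using lim that by (auto intro!: tendsto_intros)
    show "\<exists>N. \<forall>k\<ge>N. norm (\<phi>s k u - \<phi>s k v) \<le> d {u, v}"
      using adm that unfolding admissible_def by blast
  qed
  ultimately show ?thesis unfolding admissible_def by (auto simp: LIMSEQ_const_iff)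
qed

lemma delta_le:
  assumes "admissible V E m0 d \<phi>"
  shows "delta TYPE('n) V E m0 d \<le> (norm (bary V m0 (\<phi> :: 'a \<Rightarrow> real ^ 'n)))\<^sup>2"
  unfolding delta_def using assms by (intro cInf_lower) (auto intro: bdd_belowI[of _ 0])

lemma delta_attained:
  fixes \<phi>0 :: "'a \<Rightarrow> real ^ 'n"
  assumes "finite V" and m0_pos: "\<forall>u\<in>V. m0 u > 0" and "admissible V E m0 d \<phi>0"
  obtains \<phi> :: "'a \<Rightarrow> real ^ 'n"
  where "admissible V E m0 d \<phi>" and "delta TYPE('n) V E m0 d = (norm (bary V m0 \<phi>))\<^sup>2"
proof -
  define K where "K = {\<phi> :: 'a \<Rightarrow> real ^ 'n. admissible V E m0 d \<phi>}"
  define F where "F = (\<lambda>\<phi> :: 'a \<Rightarrow> real ^ 'n. (norm (bary V m0 \<phi>))\<^sup>2)"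
  have "K \<noteq> {}" using assms(3) unfolding K_def by blast
  moreover have "bdd_below (F ` K)" unfolding F_def by (intro bdd_belowI[of _ 0]) auto
  moreover have "bounded ((\<lambda>\<phi>. \<phi> u) ` K)" if "u \<in> V" for u
  proof -
    have "norm (\<phi> u) \<le> sqrt (total_mass V m0 / m0 u)" if "\<phi> \<in> K" for \<phi>
      using norm_le_sqrt_of_weighted_sum_sq[of V m0 u \<phi>] \<open>finite V\<close> m0_pos \<open>u \<in> V\<close> that
      unfolding K_def admissible_def by simp
    then show ?thesis unfolding bounded_iff by blast
  qed
  moreover have "\<psi> \<in> K \<and> (\<lambda>k. F (\<phi>s k)) \<longlonglongrightarrow> F \<psi>"
    if "\<And>k. \<phi>s k \<in> K" and lim: "\<And>u. u \<in> V \<Longrightarrow> (\<lambda>k. \<phi>s k u) \<longlonglongrightarrow> \<psi> u" for \<phi>s \<psi>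
  proof
    show "\<psi> \<in> K" using that admissible_limit unfolding K_def by blast
    show "(\<lambda>k. F (\<phi>s k)) \<longlonglongrightarrow> F \<psi>"
      unfolding F_def bary_def using lim by (intro tendsto_intros) auto
  qed
  ultimately obtain \<phi> where "\<phi> \<in> K" and min: "\<forall>\<psi>\<in>K. F \<phi> \<le> F \<psi>"
    using pointwise_compact_attains_min[OF \<open>finite V\<close>, of K F] by blast
  have "delta TYPE('n) V E m0 d = F \<phi>"
    unfolding delta_def using \<open>\<phi> \<in> K\<close> min unfolding K_def F_def by (intro cInf_eq_minimum) auto
  then show ?thesis using that \<open>\<phi> \<in> K\<close> unfolding K_def F_def by blast
qed

lemma delta_lower_bound_eq_iff:
  fixes \<phi>0 :: "'a \<Rightarrow> real ^ 'n"
  assumes "finite V" and "\<forall>u\<in>V. m0 u > 0" and "admissible V E m0 d \<phi>0"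
    and lower: "\<And>\<phi> :: 'a \<Rightarrow> real ^ 'n. admissible V E m0 d \<phi> \<Longrightarrow> B \<le> (norm (bary V m0 \<phi>))\<^sup>2"
    and equal: "\<And>\<phi> :: 'a \<Rightarrow> real ^ 'n. admissible V E m0 d \<phi> \<Longrightarrow> (norm (bary V m0 \<phi>))\<^sup>2 = B \<longleftrightarrow> P \<phi>"
  shows "delta TYPE('n) V E m0 d \<ge> B
    \<and> (delta TYPE('n) V E m0 d = B \<longleftrightarrow> (\<exists>\<phi> :: 'a \<Rightarrow> real ^ 'n. admissible V E m0 d \<phi> \<and> P \<phi>))"
proof -
  obtain \<phi>min :: "'a \<Rightarrow> real ^ 'n" where "admissible V E m0 d \<phi>min"
    and min: "delta TYPE('n) V E m0 d = (norm (bary V m0 \<phi>min))\<^sup>2"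
    using delta_attained assms(1-3) by blast
  moreover have "delta TYPE('n) V E m0 d \<le> B" if "admissible V E m0 d \<phi>" "P \<phi>" for \<phi> :: "'a \<Rightarrow> real ^ 'n"
    using delta_le[OF that(1)] equal[OF that(1)] that(2) by simp
  ultimately show ?thesis using lower equal by (metis order_antisym)
qed

theorem proposition1p5:
  fixes V :: "'a set" and E :: "'a set set"
    and m0 :: "'a \<Rightarrow> real" and d m1 :: "'a set \<Rightarrow> real"
  assumes graph: "simple_graph V E" and conn: "graph_connected V E"
    and dimV: "CARD('n) = card V"
    and m0_pos: "\<forall>u\<in>V. m0 u > 0"
    and d_pos: "\<forall>e\<in>E. d e > 0"
    and m1_nonneg: "\<forall>e\<in>E. m1 e \<ge> 0"
    and m1_conn: "graph_connected V {e\<in>E. m1 e > 0}"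
    and m1_D: "(\<Sum>e\<in>E. m1 e * (d e)\<^sup>2) = (\<Sum>e\<in>E. (d e)\<^sup>2)"
  shows "delta TYPE('n) V E m0 d \<ge>
           1 - ((\<Sum>e\<in>E. (d e)\<^sup>2) / total_mass V m0) / lambda1 V E m0 m1
      \<and> (delta TYPE('n) V E m0 d =
           1 - ((\<Sum>e\<in>E. (d e)\<^sup>2) / total_mass V m0) / lambda1 V E m0 m1
         \<longleftrightarrow> (\<exists>\<phi> :: 'a \<Rightarrow> real ^ 'n. admissible V E m0 d \<phi>
              \<and> (\<forall>u\<in>V. \<forall>v\<in>V. {u, v} \<in> E \<longrightarrow>
                   m1 {u, v} * ((d {u, v})\<^sup>2 - (norm (\<phi> u - \<phi> v))\<^sup>2) = 0)
              \<and> (\<forall>u\<in>V. \<forall>i. laplacian V E m0 m1 (\<lambda>w. \<phi> w $ i) u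
                   = lambda1 V E m0 m1 * (\<phi> u $ i - bary V m0 \<phi> $ i))))"
proof -
  interpret weighted_graph V E m0 m1
    using graph conn m0_pos m1_nonneg unfolding graph_connected_def by unfold_locales auto
  obtain x :: "real ^ 'n" where "norm x = 1" using vector_choose_size[of 1] by auto
  then have const: "admissible V E m0 d (\<lambda>_. x)"
    using d_pos by (intro admissible_const) (auto intro: less_imp_le)
  note bound = admissible_bary_bound[OF m1_conn m1_D]
  show ?thesis
    using delta_lower_bound_eq_iff[OF finite_vertices m0_pos const bound] .
qed

end
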